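(* Let $k\ge1$ and $n$ be integers. For the graph $G(n,k)$ the following are equivalent: (A) $k-1$ lies in the tail; (B) $n_k$ lies in the tail; (C) $(n-1)_{k+1}$ lies in the tail.
   Context: For an integer $\ell$, $\ell_k$ and $\ell_{k+1}$ denote the least nonnegative residues of $\ell$ modulo $k$ and $k+1$. $G(n,k)$ is the directed graph on vertices $0,1,\dots,k$ whose edges are exactly the $k$ edges $(i+n-2)_{k+1}\to(i+n-1)_k$, $1\le i\le k$; a loop $a\to a$ counts as a cycle. Vertex $k$ has in-degree $0$, vertex $(n-2)_{k+1}$ has out-degree $0$, and all other vertices have in- and out-degree $1$, so $G(n,k)$ is a disjoint union of directed cycles and one directed path, the tail, from $k$ to $(n-2)_{k+1}$ (consisting of the single vertex $k$ if $k=(n-2)_{k+1}$). *)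

theory Defs
  imports Main
begin

text \<open>Edges of G(n,k): (i+n-2) mod (k+1) \<rightarrow> (i+n-1) mod k for 1 \<le> i \<le> k.
  Residues are least nonnegative residues (Isabelle's int mod with positive modulus).\<close>
definition Gedges :: "int \<Rightarrow> int \<Rightarrow> (int \<times> int) set" where
  "Gedges n k = {((i + n - 2) mod (k + 1), (i + n - 1) mod k) | i. 1 \<le> i \<and> i \<le> k}"

text \<open>The tail: the directed path starting at vertex k (which has in-degree 0);
  its vertex set is the set of vertices reachable from k along edges.\<close>
definition tail :: "int \<Rightarrow> int \<Rightarrow> int set" where
  "tail n k = {v. (k, v) \<in> (Gedges n k)\<^sup>*}"

end

theory Submission
  imports Defs
begin

(* Every vertex of G(n,k) has in- and out-degree at most one, k is a source, h = (n-2)_{k+1}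
   is a sink, and every other vertex of {0..k} has an out-edge. By finiteness the path from k
   therefore ends in h, so the tail is exactly the set of vertices from which h is reachable.
   The reflection v |-> (n-3-v)_{k+1} reverses every edge and maps k to h and k-1 to
   (n-1)_{k+1}; hence k-1 reaches h iff k reaches (n-1)_{k+1}, which is (A) <-> (C).
   Finally the edge for i = 1 is (n-1)_{k+1} -> n_k, the only edge into n_k, and n_k differs
   from k; this gives (B) <-> (C). *)

lemma reachable_from_source_has_sink:
  assumes "finite {v. (s, v) \<in> r\<^sup>*}"
    and "single_valued (r\<inverse>)"
    and "\<And>u. (u, s) \<notin> r"
  obtains h where "(s, h) \<in> r\<^sup>*" and "\<And>w. (h, w) \<notin> r"
proof (rule ccontr)
  (* Otherwise a choice of successors maps the finite set R of vertices reachable from s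
     injectively into itself, but s is not in the image. *)
  note sink_thesis = that
  assume no_sink: "\<not> thesis"
  define R where "R = {v. (s, v) \<in> r\<^sup>*}"
  define f where "f v = (SOME w. (v, w) \<in> r)" for v
  have step: "(v, f v) \<in> r" if "v \<in> R" for v
  proof -
    have "\<exists>w. (v, w) \<in> r" using that sink_thesis no_sink R_def by auto
    then show ?thesis unfolding f_def by (rule someI_ex)
  qed
  have "f ` R \<subseteq> R"
    using step by (auto simp: R_def intro: rtrancl_into_rtrancl)
  moreover have "inj_on f R"
  proof (rule inj_onI)
    fix x y assume "x \<in> R" "y \<in> R" "f x = f y"
    then have "(f x, x) \<in> r\<inverse>" "(f x, y) \<in> r\<inverse>" using step by force+
    then show "x = y" using single_valuedD[OF assms(2)] by blast
  qed
  ultimately have "f ` R = R"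
    using endo_inj_surj assms(1) unfolding R_def by blast
  moreover have "s \<in> R" by (simp add: R_def)
  ultimately obtain v where "v \<in> R" "f v = s" by force
  then show False using step assms(3) by force
qed

lemma reachable_from_source_iff_reaches_sink:
  assumes "single_valued r" and "single_valued (r\<inverse>)"
    and "\<And>u. (u, s) \<notin> r" and "\<And>w. (h, w) \<notin> r"
    and "(s, h) \<in> r\<^sup>*"
  shows "(s, v) \<in> r\<^sup>* \<longleftrightarrow> (v, h) \<in> r\<^sup>*"
proof
  assume "(s, v) \<in> r\<^sup>*"
  then have "(v, h) \<in> r\<^sup>* \<or> (h, v) \<in> r\<^sup>*"
    using single_valued_confluent[OF assms(1)] assms(5) by blast
  then show "(v, h) \<in> r\<^sup>*"
    using assms(4) by (auto elim: converse_rtranclE)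
next
  assume "(v, h) \<in> r\<^sup>*"
  then have "(h, v) \<in> (r\<inverse>)\<^sup>*" "(h, s) \<in> (r\<inverse>)\<^sup>*"
    using assms(5) by (simp_all add: rtrancl_converse)
  then have "(s, v) \<in> r\<^sup>* \<or> (v, s) \<in> r\<^sup>*"
    using single_valued_confluent[OF assms(2)] by (auto simp: rtrancl_converse)
  then show "(s, v) \<in> r\<^sup>*"
    using assms(3) by (auto elim: rtranclE)
qed

lemma rtrancl_via_unique_pred:
  assumes "single_valued (r\<inverse>)" and "(a, b) \<in> r" and "b \<noteq> s"
  shows "(s, b) \<in> r\<^sup>* \<longleftrightarrow> (s, a) \<in> r\<^sup>*"
proof
  assume "(s, b) \<in> r\<^sup>*"
  then show "(s, a) \<in> r\<^sup>*"
    using assms by (cases rule: rtranclE) (auto dest: single_valuedD)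
qed (rule rtrancl_into_rtrancl[OF _ assms(2)])

lemma add_mod_cancel_interval:
  fixes i j c m :: int
  assumes "i \<in> {1..k}" and "j \<in> {1..k}" and "k \<le> m"
    and "(i + c) mod m = (j + c) mod m"
  shows "i = j"
proof (rule ccontr)
  assume "i \<noteq> j"
  moreover have "m dvd i - j" using assms(4) by (simp add: mod_eq_dvd_iff)
  ultimately have "\<bar>m\<bar> \<le> \<bar>i - j\<bar>" using dvd_imp_le_int by simp
  then show False using assms(1-3) by auto
qed

lemma GedgesI:
  "1 \<le> i \<Longrightarrow> i \<le> k \<Longrightarrow> ((i + n - 2) mod (k + 1), (i + n - 1) mod k) \<in> Gedges n k"
  unfolding Gedges_def by blast

lemma GedgesE:
  assumes "(u, v) \<in> Gedges n k"
  obtains i where "1 \<le> i" and "i \<le> k"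
    and "u = (i + n - 2) mod (k + 1)" and "v = (i + n - 1) mod k"
  using assms unfolding Gedges_def by blast

lemma Gedges_range:
  assumes "(u, v) \<in> Gedges n k"
  shows "u \<in> {0..k}" and "v \<in> {0..<k}"
proof -
  from assms obtain i where "1 \<le> i" "i \<le> k"
    and uv: "u = (i + n - 2) mod (k + 1)" "v = (i + n - 1) mod k"
    by (rule GedgesE)
  then have "0 < k" by simp
  then show "u \<in> {0..k}" and "v \<in> {0..<k}"
    using uv pos_mod_bound[of "k + 1" "i + n - 2"] by auto
qed

lemma tail_subset:
  assumes "0 \<le> k" shows "tail n k \<subseteq> {0..k}"
proof
  fix v assume "v \<in> tail n k"
  then have "(k, v) \<in> (Gedges n k)\<^sup>*" by (simp add: tail_def)
  then show "v \<in> {0..k}"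
    using assms by (cases rule: rtranclE) (use Gedges_range(2) in force)+
qed

lemma no_Gedge_into_start: "(u, k) \<notin> Gedges n k"
  using Gedges_range(2) by (metis atLeastLessThan_iff less_irrefl)

lemma no_Gedge_out_of_end: "((n - 2) mod (k + 1), w) \<notin> Gedges n k"
proof
  assume "((n - 2) mod (k + 1), w) \<in> Gedges n k"
  then obtain i where i: "1 \<le> i" "i \<le> k" "(n - 2) mod (k + 1) = (i + n - 2) mod (k + 1)"
    by (rule GedgesE)
  then have "(k + 1) dvd (i + n - 2) - (n - 2)" by (simp add: mod_eq_dvd_iff)
  then have "(k + 1) dvd i" by simp
  then show False using i zdvd_imp_le[of "k + 1" i] by simp
qed

lemma Gedge_out_of:
  assumes "v \<in> {0..k}" and "v \<noteq> (n - 2) mod (k + 1)"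
  obtains w where "(v, w) \<in> Gedges n k"
proof -
  define i where "i = (v - (n - 2)) mod (k + 1)"
  have "(i + (n - 2)) mod (k + 1) = (v - (n - 2) + (n - 2)) mod (k + 1)"
    unfolding i_def by (rule mod_add_left_eq)
  also have "\<dots> = v" using assms(1) by simp
  finally have v: "(i + n - 2) mod (k + 1) = v" by (simp add: add_diff_eq)
  have "i \<noteq> 0" using assms(2) v by auto
  moreover have "0 \<le> i" and "i \<le> k"
    using assms(1) pos_mod_bound[of "k + 1" "v - (n - 2)"] by (auto simp: i_def)
  ultimately show ?thesis using that GedgesI[of i k n] v by simp
qed

lemma single_valued_Gedges: "single_valued (Gedges n k)"
proof (rule single_valuedI)
  fix u v w assume "(u, v) \<in> Gedges n k" and "(u, w) \<in> Gedges n k"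
  obtain i where i: "1 \<le> i" "i \<le> k" "u = (i + n - 2) mod (k + 1)" "v = (i + n - 1) mod k"
    using \<open>(u, v) \<in> Gedges n k\<close> by (rule GedgesE)
  obtain j where j: "1 \<le> j" "j \<le> k" "u = (j + n - 2) mod (k + 1)" "w = (j + n - 1) mod k"
    using \<open>(u, w) \<in> Gedges n k\<close> by (rule GedgesE)
  have "(i + (n - 2)) mod (k + 1) = (j + (n - 2)) mod (k + 1)"
    using i(3) j(3) by (metis add_diff_eq)
  then have "i = j"
    using add_mod_cancel_interval[of i k j "k + 1"] i(1,2) j(1,2) by simp
  then show "v = w" using i(4) j(4) by simp
qed

lemma single_valued_converse_Gedges: "single_valued ((Gedges n k)\<inverse>)"
proof (rule single_valuedI)
  fix v u w assume "(v, u) \<in> (Gedges n k)\<inverse>" and "(v, w) \<in> (Gedges n k)\<inverse>"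
  obtain i where i: "1 \<le> i" "i \<le> k" "u = (i + n - 2) mod (k + 1)" "v = (i + n - 1) mod k"
    using \<open>(v, u) \<in> (Gedges n k)\<inverse>\<close> by (auto elim: GedgesE)
  obtain j where j: "1 \<le> j" "j \<le> k" "w = (j + n - 2) mod (k + 1)" "v = (j + n - 1) mod k"
    using \<open>(v, w) \<in> (Gedges n k)\<inverse>\<close> by (auto elim: GedgesE)
  have "(i + (n - 1)) mod k = (j + (n - 1)) mod k"
    using i(4) j(4) by (metis add_diff_eq)
  then have "i = j"
    using add_mod_cancel_interval[of i k j k] i(1,2) j(1,2) by simp
  then show "u = w" using i(3) j(3) by simp
qed

lemma mem_tail_iff_reaches_end:
  assumes "k \<ge> 1"
  shows "v \<in> tail n k \<longleftrightarrow> (v, (n - 2) mod (k + 1)) \<in> (Gedges n k)\<^sup>*"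
proof -
  have "finite {v. (k, v) \<in> (Gedges n k)\<^sup>*}"
    using tail_subset[of k n] assms finite_subset unfolding tail_def by auto
  then obtain h where kh: "(k, h) \<in> (Gedges n k)\<^sup>*" and sink: "\<And>w. (h, w) \<notin> Gedges n k"
    using reachable_from_source_has_sink single_valued_converse_Gedges no_Gedge_into_start
    by metis
  have "h \<in> {0..k}" using kh tail_subset[of k n] assms by (auto simp: tail_def)
  then have "h = (n - 2) mod (k + 1)" using sink Gedge_out_of by metis
  then show ?thesis
    using reachable_from_source_iff_reaches_sink[OF single_valued_Gedges
        single_valued_converse_Gedges no_Gedge_into_start no_Gedge_out_of_end] kh
    by (simp add: tail_def)
qed

definition Gmirror :: "int \<Rightarrow> int \<Rightarrow> int \<Rightarrow> int" where
  "Gmirror n k v = (n - 3 - v) mod (k + 1)"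

lemma Gmirror_Gmirror: "Gmirror n k (Gmirror n k v) = v mod (k + 1)"
  by (simp add: Gmirror_def mod_diff_right_eq)

lemma Gmirror_Gedge:
  assumes "(u, v) \<in> Gedges n k"
  shows "(Gmirror n k v, Gmirror n k u) \<in> Gedges n k"
proof -
  obtain i where i: "1 \<le> i" "i \<le> k" "u = (i + n - 2) mod (k + 1)" "v = (i + n - 1) mod k"
    using assms by (rule GedgesE)
  have "v \<in> {0..<k}" using assms by (rule Gedges_range)
  define j where "j = k - v"
  have j: "1 \<le> j" "j \<le> k" using \<open>v \<in> {0..<k}\<close> by (auto simp: j_def)
  have "j + n - 2 = (n - 3 - v) + (k + 1)" by (simp add: j_def)
  then have source: "(j + n - 2) mod (k + 1) = Gmirror n k v"
    by (simp only: Gmirror_def mod_add_self2)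
  have "j + n - 1 = (n - 1 - v) + k" by (simp add: j_def)
  then have "(j + n - 1) mod k = (n - 1 - v) mod k" by (simp only: mod_add_self2)
  also have "\<dots> = (n - 1 - (i + n - 1)) mod k"
    using i(4) by (simp add: mod_diff_right_eq)
  also have "n - 1 - (i + n - 1) = (k - i) - k" by simp
  also have "((k - i) - k) mod k = k - i"
    by (subst minus_mod_self2, rule mod_pos_pos_trivial) (use i(1,2) in simp_all)
  finally have target: "(j + n - 1) mod k = k - i" .
  have "Gmirror n k u = (n - 3 - (i + n - 2)) mod (k + 1)"
    using i(3) by (simp add: Gmirror_def mod_diff_right_eq)
  also have "n - 3 - (i + n - 2) = (k - i) - (k + 1)" by simp
  also have "((k - i) - (k + 1)) mod (k + 1) = k - i"
    by (subst minus_mod_self2, rule mod_pos_pos_trivial) (use i(1,2) in simp_all)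
  finally have "Gmirror n k u = k - i" .
  with target show ?thesis using GedgesI[OF j, of n] source by simp
qed

lemma Gmirror_rtrancl:
  "(u, v) \<in> (Gedges n k)\<^sup>* \<Longrightarrow> (Gmirror n k v, Gmirror n k u) \<in> (Gedges n k)\<^sup>*"
proof (induction rule: rtrancl_induct)
  case (step y z)
  then show ?case by (metis Gmirror_Gedge converse_rtrancl_into_rtrancl)
qed simp

lemma Gmirror_rtrancl_iff:
  assumes "u \<in> {0..k}" and "v \<in> {0..k}"
  shows "(Gmirror n k v, Gmirror n k u) \<in> (Gedges n k)\<^sup>* \<longleftrightarrow> (u, v) \<in> (Gedges n k)\<^sup>*"
proof -
  have "u mod (k + 1) = u" and "v mod (k + 1) = v" using assms by simp_all
  then show ?thesis
    using Gmirror_rtrancl[of "Gmirror n k v" "Gmirror n k u" n k] Gmirror_rtrancl[of u v n k]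
    by (auto simp: Gmirror_Gmirror)
qed

theorem lemma4p5:
  fixes n k :: int
  assumes "k \<ge> 1"
  shows "(k - 1 \<in> tail n k \<longleftrightarrow> n mod k \<in> tail n k)
       \<and> (n mod k \<in> tail n k \<longleftrightarrow> (n - 1) mod (k + 1) \<in> tail n k)"
proof -
  define h where "h = (n - 2) mod (k + 1)"
  define a where "a = (n - 1) mod (k + 1)"
  have "n - 3 - k = (n - 2) - (k + 1)" and "n - 3 - (k - 1) = (n - 1) - (k + 1)" by simp_all
  then have mirror_start: "Gmirror n k k = h" and mirror_pred: "Gmirror n k (k - 1) = a"
    by (simp_all only: Gmirror_def h_def a_def minus_mod_self2)
  then have mirror_end: "Gmirror n k h = k"
    using Gmirror_Gmirror[of n k k] assms by simp
  have "h \<in> {0..k}" using assms pos_mod_bound[of "k + 1" "n - 2"] by (simp add: h_def)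
  then have A_iff_C: "k - 1 \<in> tail n k \<longleftrightarrow> a \<in> tail n k"
    using mem_tail_iff_reaches_end[OF assms] Gmirror_rtrancl_iff[of "k - 1" k h n]
      mirror_end mirror_pred assms
    by (simp add: h_def tail_def)
  have "n mod k \<noteq> k" using assms by (intro less_imp_neq pos_mod_bound) simp
  then have B_iff_C: "n mod k \<in> tail n k \<longleftrightarrow> a \<in> tail n k"
    using rtrancl_via_unique_pred[OF single_valued_converse_Gedges GedgesI[of 1 k n]] assms
    by (simp add: tail_def a_def)
  show ?thesis using A_iff_C B_iff_C by (simp add: a_def)
qed

end
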